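(* Let $G$ be a gradual mechanism implementing an SCF $f$ that has no SPL opportunity, and let $G'$ be obtained from $G$ through a COA or through an inverse ILL. Then $G'$ has no SPL opportunity.
   Context: Setting. $N$ finite set of agents, $X$ finite set of outcomes, finite type spaces $\Theta_i$; $\Theta=\prod_i\Theta_i$; an SCF is $f:\Theta\to X$. Dynamic game forms. A dynamic game form with perfect recall consists of a finite tree $\bar H$ of histories (finite sequences of action profiles) containing the empty initial history $\varnothing$, closed under prefixes ($\preceq$ prefix order, $\prec$ strict); terminal histories $Z$, non-terminal $H$; at each $h\in H$ a nonempty set $\mathbb P(h)$ of agents move simultaneously with available actions $A_i(h)$, all action profiles leading to successors; $\mathbb P(\varnothing)=N$; each agent's decision nodes $H_i$ are partitioned into information sets $\boldsymbol H_i$, with available actions constant on information sets ($A(\boldsymbol h_i)$) and perfect recall; $\mathcal X:Z\to X$. For information sets of $i$, $\boldsymbol h_i\preceq\bar{\boldsymbol h}_i$ if $h\preceq\bar h$ for some $h\in\boldsymbol h_i,\bar h\in\bar{\boldsymbol h}_i$; $\sigma_{a_i}(\boldsymbol h_i)$ is the set of immediate successor information sets of $i$ reached after $i$ chooses $a_i$ at $\boldsymbol h_i$; for a history $\bar h$, $\boldsymbol h_i\prec\bar h$ means $h\prec\bar h$ for some $h\in\boldsymbol h_i$. Gradual mechanisms. A GM implementing $f$ is such a game form in which (1) actions of $i$ are nonempty subsets of $\Theta_i$; (2) at every $h\in H_i$ the available actions of $i$ are pairwise disjoint with union $\Theta_i(h)$, where for any history $h$, $\Theta_i(h)$ is the last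 action of $i$ in $h$ ($\Theta_i$ if $i$ has not acted); (3) $\mathcal X(z)=f(\theta)$ for all $z\in Z$, $\theta\in\Theta(z)=\prod_i\Theta_i(z)$. $\Theta_{-i}(\boldsymbol h_i)=\bigcup_{h\in\boldsymbol h_i}\prod_{j\ne i}\Theta_j(h)$. SPL opportunity. A GM has an SPL opportunity if there exist an agent $i$, an information set $\boldsymbol h_i$ and $a_i\in A(\boldsymbol h_i)$ with $|a_i|\ge 2$ such that $\{z\in Z:\boldsymbol h_i\prec z,\ \Theta_i(z)=a_i\}\ne\varnothing$ (a splitting then appends, at each such $z$, a move of $i$ alone choosing between the two parts of a partition of $a_i$). Coalescing (COA). Given information sets $\boldsymbol h_i,\bar{\boldsymbol h}_i$ of $i$ and $a_i\in A(\boldsymbol h_i)$ with $\bar{\boldsymbol h}_i\in\sigma_{a_i}(\boldsymbol h_i)$ and $\Theta_{-i}(\boldsymbol h_i)=\Theta_{-i}(\bar{\boldsymbol h}_i)$: agent $i$'s move at $\bar{\boldsymbol h}_i$ is deleted and at $\boldsymbol h_i$ agent $i$ instead chooses from $(A(\boldsymbol h_i)\setminus\{a_i\})\cup A(\bar{\boldsymbol h}_i)$; every history through $\boldsymbol h_i$ with $i$ choosing $a_i$ is replaced by the corresponding histories in which $i$ chooses some $\bar a_i\in A(\bar{\boldsymbol h}_i)$ at $\boldsymbol h_i$ (if $\bar{\boldsymbol h}_i$ is reached, $\bar a_i$ is the action taken there; otherwise one copy per $\bar a_i$), with other agents' moves, information sets (except the deleted $\bar{\boldsymbol h}_i$) and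 outcomes carried over. Illuminating (ILL). Given an information set $\boldsymbol h_i$ and a partition $\{\boldsymbol h_i^1,\boldsymbol h_i^2\}$ of it into nonempty sets: keep histories, other agents' information sets and outcomes; replace every information set $\bar{\boldsymbol h}_i$ of $i$ with $\boldsymbol h_i\preceq\bar{\boldsymbol h}_i$ by the nonempty sets among $\bar{\boldsymbol h}_i^k=\{\bar h\in\bar{\boldsymbol h}_i:\exists h\in\boldsymbol h_i^k,\ h\preceq\bar h\}$, $k=1,2$. An inverse ILL transforms $G$ into $G'$ whenever an ILL transforms $G'$ into $G$. *)

theory Defs
  imports Main "HOL-Library.Sublist" "HOL-Library.Disjoint_Sets" "HOL-Library.FuncSet"
begin

text \<open>Agents form the finite type 'i (so N = UNIV); all types of all agents live in one
type 't, agent j's type space being Th j.  An action of an agent is a set of types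
('t set).  An action profile at a history is a partial map: p j = Some s iff j moves and
chooses s; p j = None iff j does not move.\<close>

type_synonym ('i,'t) profile = "'i \<Rightarrow> 't set option"
type_synonym ('i,'t) history = "('i,'t) profile list"

datatype ('i,'t,'x) gform = GF
  (tree: "('i,'t) history set")
  (infos: "'i \<Rightarrow> ('i,'t) history set set")
  (outcome: "('i,'t) history \<Rightarrow> 'x")

definition children :: "('i,'t,'x) gform \<Rightarrow> ('i,'t) history \<Rightarrow> ('i,'t) profile set" where
  "children G h = {p. h @ [p] \<in> tree G}"

definition nonterm_hist :: "('i,'t,'x) gform \<Rightarrow> ('i,'t) history set" where
  "nonterm_hist G = {h \<in> tree G. children G h \<noteq> {}}"

definition terminal :: "('i,'t,'x) gform \<Rightarrow> ('i,'t) history set" where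
  "terminal G = {h \<in> tree G. children G h = {}}"

definition movers :: "('i,'t,'x) gform \<Rightarrow> ('i,'t) history \<Rightarrow> 'i set" where
  "movers G h = {j. \<exists>p \<in> children G h. p j \<noteq> None}"

definition acts :: "('i,'t,'x) gform \<Rightarrow> 'i \<Rightarrow> ('i,'t) history \<Rightarrow> 't set set" where
  "acts G j h = {s. \<exists>p \<in> children G h. p j = Some s}"

definition dec :: "('i,'t,'x) gform \<Rightarrow> 'i \<Rightarrow> ('i,'t) history set" where
  "dec G j = {h \<in> nonterm_hist G. j \<in> movers G h}"

text \<open>available actions at an information set (they are constant on it)\<close>
definition actsI :: "('i,'t,'x) gform \<Rightarrow> 'i \<Rightarrow> ('i,'t) history set \<Rightarrow> 't set set" where
  "actsI G j I = (\<Union>h\<in>I. acts G j h)"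

definition iset :: "('i,'t,'x) gform \<Rightarrow> 'i \<Rightarrow> ('i,'t) history \<Rightarrow> ('i,'t) history set" where
  "iset G j h = (THE I. I \<in> infos G j \<and> h \<in> I)"

definition exper :: "('i,'t,'x) gform \<Rightarrow> 'i \<Rightarrow> ('i,'t) history
    \<Rightarrow> (('i,'t) history set \<times> 't set) list" where
  "exper G j h = [(iset G j (take k h), the ((h ! k) j)). k \<leftarrow> [0..<length h], (h ! k) j \<noteq> None]"

definition game_form :: "('i,'t,'x) gform \<Rightarrow> bool" where
  "game_form G \<longleftrightarrow>
     finite (tree G) \<and> [] \<in> tree G \<and>
     (\<forall>g \<in> tree G. \<forall>h. prefix h g \<longrightarrow> h \<in> tree G) \<and>
     (\<forall>h \<in> nonterm_hist G. movers G h \<noteq> {} \<and>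
        children G h = {p. (\<forall>j. j \<in> movers G h \<longleftrightarrow> p j \<noteq> None) \<and>
                           (\<forall>j s. p j = Some s \<longrightarrow> s \<in> acts G j h)}) \<and>
     [] \<in> nonterm_hist G \<and> movers G [] = UNIV \<and>
     (\<forall>j. partition_on (dec G j) (infos G j)) \<and>
     (\<forall>j. \<forall>I \<in> infos G j. \<forall>h \<in> I. \<forall>h' \<in> I. acts G j h = acts G j h') \<and>
     (\<forall>j. \<forall>I \<in> infos G j. \<forall>h \<in> I. \<forall>h' \<in> I. exper G j h = exper G j h')"

definition th_at :: "('i \<Rightarrow> 't set) \<Rightarrow> 'i \<Rightarrow> ('i,'t) history \<Rightarrow> 't set" where
  "th_at Th j h = (case filter (\<lambda>p. p j \<noteq> None) h of [] \<Rightarrow> Th j | ps \<Rightarrow> the (last ps j))"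

definition gm :: "('i \<Rightarrow> 't set) \<Rightarrow> (('i \<Rightarrow> 't) \<Rightarrow> 'x) \<Rightarrow> ('i,'t,'x) gform \<Rightarrow> bool" where
  "gm Th f G \<longleftrightarrow> game_form G \<and>
     (\<forall>j. \<forall>h \<in> dec G j. (\<forall>s \<in> acts G j h. s \<noteq> {} \<and> s \<subseteq> Th j) \<and>
          disjoint (acts G j h) \<and> \<Union>(acts G j h) = th_at Th j h) \<and>
     (\<forall>z \<in> terminal G. \<forall>\<theta>. (\<forall>j. \<theta> j \<in> th_at Th j z) \<longrightarrow> outcome G z = f \<theta>)"

text \<open>Theta_{-i}(I), profiles of the other agents (coordinate i fixed to undefined)\<close>
definition theta_minus :: "('i \<Rightarrow> 't set) \<Rightarrow> 'i \<Rightarrow> ('i,'t) history set \<Rightarrow> ('i \<Rightarrow> 't) set" where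
  "theta_minus Th i I = (\<Union>h\<in>I. PiE (UNIV - {i}) (\<lambda>j. th_at Th j h))"

definition has_spl :: "('i \<Rightarrow> 't set) \<Rightarrow> ('i,'t,'x) gform \<Rightarrow> bool" where
  "has_spl Th G \<longleftrightarrow> (\<exists>i I s. I \<in> infos G i \<and> s \<in> actsI G i I \<and> card s \<ge> 2 \<and>
      (\<exists>z \<in> terminal G. (\<exists>h \<in> I. strict_prefix h z) \<and> th_at Th i z = s))"

definition succ_is :: "('i,'t,'x) gform \<Rightarrow> 'i \<Rightarrow> ('i,'t) history set \<Rightarrow> 't set
    \<Rightarrow> ('i,'t) history set set" where
  "succ_is G i I a = {J \<in> infos G i. \<exists>h \<in> I. \<exists>p r. h @ p # r \<in> J \<and> p i = Some a \<and>
       (\<forall>k < length r. (r ! k) i = None)}"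

definition drop_mv :: "'i \<Rightarrow> ('i,'t) profile \<Rightarrow> ('i,'t) history" where
  "drop_mv i q = (if \<forall>j. j \<noteq> i \<longrightarrow> q j = None then [] else [q(i := None)])"

text \<open>the histories of the coalesced game corresponding to a history g of G\<close>
definition coa_img :: "('i,'t,'x) gform \<Rightarrow> 'i \<Rightarrow> ('i,'t) history set \<Rightarrow> 't set
    \<Rightarrow> ('i,'t) history set \<Rightarrow> ('i,'t) history \<Rightarrow> ('i,'t) history set" where
  "coa_img G i I a J g =
    (if \<exists>h p r. h \<in> I \<and> g = h @ p # r \<and> p i = Some a then
       {h @ (p(i := Some b)) # r1 @ drop_mv i q @ r2 | h p r1 q r2 b.
          h \<in> I \<and> g = h @ p # r1 @ q # r2 \<and> p i = Some a \<and> h @ p # r1 \<in> J \<and> q i = Some b}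
       \<union> {h @ (p(i := Some b)) # r | h p r b.
          h \<in> I \<and> g = h @ p # r \<and> p i = Some a \<and> b \<in> actsI G i J \<and>
          (\<forall>r1 q r2. r = r1 @ q # r2 \<longrightarrow> h @ p # r1 \<notin> J)}
     else {g})"

definition coa :: "('i \<Rightarrow> 't set) \<Rightarrow> ('i,'t,'x) gform \<Rightarrow> ('i,'t,'x) gform \<Rightarrow> bool" where
  "coa Th G G' \<longleftrightarrow> game_form G \<and>
    (\<exists>i I a J. I \<in> infos G i \<and> a \<in> actsI G i I \<and> J \<in> succ_is G i I a \<and>
       theta_minus Th i I = theta_minus Th i J \<and>
       tree G' = (\<Union>g \<in> tree G. coa_img G i I a J g) \<and>
       (\<forall>j. infos G' j = (\<lambda>K. \<Union>g\<in>K. coa_img G i I a J g) `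
                          (if j = i then infos G i - {J} else infos G j)) \<and>
       (\<forall>z \<in> terminal G. \<forall>z' \<in> coa_img G i I a J z. outcome G' z' = outcome G z))"

definition is_le :: "('i,'t) history set \<Rightarrow> ('i,'t) history set \<Rightarrow> bool" where
  "is_le I K \<longleftrightarrow> (\<exists>h \<in> I. \<exists>h' \<in> K. prefix h h')"

definition ill_part :: "('i,'t) history set \<Rightarrow> ('i,'t) history set \<Rightarrow> ('i,'t) history set" where
  "ill_part K Ik = {g \<in> K. \<exists>h \<in> Ik. prefix h g}"

definition ill :: "('i,'t,'x) gform \<Rightarrow> ('i,'t,'x) gform \<Rightarrow> bool" where
  "ill G G' \<longleftrightarrow> game_form G \<and>
    (\<exists>i I I1 I2. I \<in> infos G i \<and> I1 \<noteq> {} \<and> I2 \<noteq> {} \<and> I1 \<inter> I2 = {} \<and> I1 \<union> I2 = I \<and>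
       tree G' = tree G \<and> outcome G' = outcome G \<and>
       (\<forall>j. j \<noteq> i \<longrightarrow> infos G' j = infos G j) \<and>
       infos G' i = {K \<in> infos G i. \<not> is_le I K} \<union>
         {K'. \<exists>K \<in> infos G i. is_le I K \<and> K' \<noteq> {} \<and>
               (K' = ill_part K I1 \<or> K' = ill_part K I2)})"

end

(* In a gradual mechanism an SPL opportunity exists exactly when, at some terminal history,
   some agent's remaining set of types has at least two elements: that set is the agent's last
   action, taken at an information set preceding the history.  It therefore suffices that every
   terminal history of G' leaves each agent with a subset of the types left by some terminal
   history of G.  An inverse illumination does not change the tree at all.  A coalescing only
   moves i's choice at J forward to I: a terminal history of G' either is one of G, or comes from
   one of G with the same type sets, or (when it skips J) leaves i with an action at J, which is
   a subset of a; if it ends exactly where J would be, it is matched by the terminal history of G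
   that extends it by i's deleted move. *)
theory Submission imports Defs begin

definition own_actions :: "'i \<Rightarrow> ('i,'t) history \<Rightarrow> 't set list" where
  "own_actions j h = map (\<lambda>p. the (p j)) (filter (\<lambda>p. p j \<noteq> None) h)"

lemma own_actions_simps [simp]:
  "own_actions j [] = []"
  "own_actions j (h @ g) = own_actions j h @ own_actions j g"
  "own_actions j (p # h) = (if p j = None then own_actions j h else the (p j) # own_actions j h)"
  by (auto simp: own_actions_def)

lemma th_at_eq_last_own_action:
  "th_at Th j h = (if own_actions j h = [] then Th j else last (own_actions j h))"
  by (cases "filter (\<lambda>p. p j \<noteq> None) h")
     (simp_all add: th_at_def own_actions_def last_map)

lemma length_exper: "length (exper G j h) = length (own_actions j h)"
proof -
  have comprehension: "length [e k. k \<leftarrow> ks, P k] = length (filter P ks)" for e P ks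
    by (induction ks) auto
  have "length (exper G j h) = length (filter (\<lambda>p. p j \<noteq> None) (map (nth h) [0..<length h]))"
    unfolding exper_def comprehension by (simp add: filter_map o_def)
  then show ?thesis by (simp add: map_nth own_actions_def)
qed

lemma last_own_move:
  assumes "own_actions j z \<noteq> []"
  obtains x p y where "z = x @ p # y" "p j \<noteq> None" "own_actions j y = []"
  using assms
proof (induction z arbitrary: thesis rule: rev_induct)
  case Nil
  then show ?case by simp
next
  case (snoc q z)
  show ?case
  proof (cases "q j = None")
    case True
    then show ?thesis
      using snoc.IH[of thesis] snoc.prems by (force intro: snoc.prems(1)[of _ _ "_ @ [q]"])
  next
    case False
    then show ?thesis using snoc.prems(1)[of z q "[]"] by simp
  qed
qed

lemma game_form_prefix_closed: "game_form G \<Longrightarrow> g \<in> tree G \<Longrightarrow> prefix h g \<Longrightarrow> h \<in> tree G"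
  by (auto simp: game_form_def)

lemma game_form_infos_partition: "game_form G \<Longrightarrow> partition_on (dec G j) (infos G j)"
  by (auto simp: game_form_def)

lemma game_form_acts_eq:
  "game_form G \<Longrightarrow> I \<in> infos G j \<Longrightarrow> h \<in> I \<Longrightarrow> h' \<in> I \<Longrightarrow> acts G j h = acts G j h'"
  unfolding game_form_def by blast

lemma game_form_own_actions_length_eq:
  assumes "game_form G" "I \<in> infos G j" "h \<in> I" "h' \<in> I"
  shows "length (own_actions j h) = length (own_actions j h')"
proof -
  have "exper G j h = exper G j h'"
    using assms unfolding game_form_def by blast
  then show ?thesis by (metis length_exper)
qed

lemma game_form_infos_dec: "game_form G \<Longrightarrow> I \<in> infos G j \<Longrightarrow> h \<in> I \<Longrightarrow> h \<in> dec G j"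
  using game_form_infos_partition[of G j] unfolding partition_on_def by blast

lemma game_form_dec_infos:
  "game_form G \<Longrightarrow> h \<in> dec G j \<Longrightarrow> \<exists>I \<in> infos G j. h \<in> I"
  using game_form_infos_partition[of G j] unfolding partition_on_def by blast

lemma game_form_dec_if_moves:
  assumes "game_form G" "x @ [p] \<in> tree G" "p j \<noteq> None"
  shows "x \<in> dec G j" "the (p j) \<in> acts G j x"
proof -
  have "x \<in> tree G" "p \<in> children G x"
    using assms game_form_prefix_closed[OF assms(1,2), of x] by (auto simp: children_def)
  then show "x \<in> dec G j" "the (p j) \<in> acts G j x"
    using assms(3) by (auto simp: dec_def nonterm_hist_def movers_def acts_def)
qed

lemma game_form_children:
  "game_form G \<Longrightarrow> h \<in> nonterm_hist G \<Longrightarrow>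
    children G h = {p. (\<forall>j. j \<in> movers G h \<longleftrightarrow> p j \<noteq> None) \<and>
                       (\<forall>j s. p j = Some s \<longrightarrow> s \<in> acts G j h)}"
  unfolding game_form_def by (elim conjE) (drule bspec, assumption, elim conjE, assumption)

lemma terminalI: "g \<in> tree G \<Longrightarrow> (\<And>q. g @ [q] \<in> tree G \<Longrightarrow> False) \<Longrightarrow> g \<in> terminal G"
  by (auto simp: terminal_def children_def)

lemma game_form_terminal_own_actions_nonempty:
  assumes G: "game_form G" and z: "z \<in> terminal G"
  shows "own_actions j z \<noteq> []"
proof -
  have root: "[] \<in> nonterm_hist G" "movers G [] = UNIV"
    using G by (simp_all add: game_form_def)
  then obtain p0 rest where z_eq: "z = p0 # rest"
    using z by (cases z) (auto simp: terminal_def nonterm_hist_def)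
  have "[p0] \<in> tree G"
    using game_form_prefix_closed[OF G, of z "[p0]"] z z_eq by (simp add: terminal_def)
  then have "p0 \<in> children G []"
    by (simp add: children_def)
  then have "p0 j \<noteq> None"
    using game_form_children[OF G root(1)] root(2) by blast
  then show ?thesis using z_eq by auto
qed

lemma gm_th_at_subset:
  assumes gm: "gm Th f G" and z: "z \<in> tree G"
  shows "th_at Th j z \<subseteq> Th j"
proof (cases "own_actions j z = []")
  case True
  then show ?thesis by (simp add: th_at_eq_last_own_action)
next
  case False
  then obtain x p y where z_eq: "z = x @ p # y" and moves: "p j \<noteq> None"
    and no_later: "own_actions j y = []"
    by (rule last_own_move)
  have "x @ [p] \<in> tree G"
    using gm game_form_prefix_closed[of G z "x @ [p]"] z z_eq by (simp add: gm_def)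
  then have "x \<in> dec G j" "the (p j) \<in> acts G j x"
    using gm moves game_form_dec_if_moves[of G x p j] by (simp_all add: gm_def)
  then have "the (p j) \<subseteq> Th j"
    using gm unfolding gm_def by blast
  then show ?thesis
    using z_eq moves no_later by (auto simp: th_at_eq_last_own_action)
qed

lemma has_spl_imp_terminal_card:
  "has_spl Th G \<Longrightarrow> \<exists>z \<in> terminal G. \<exists>j. 2 \<le> card (th_at Th j z)"
  unfolding has_spl_def by blast

lemma gm_terminal_card_imp_has_spl:
  assumes gm: "gm Th f G" and z: "z \<in> terminal G" and card: "2 \<le> card (th_at Th j z)"
  shows "has_spl Th G"
proof -
  have G: "game_form G" using gm by (simp add: gm_def)
  obtain x p y where z_eq: "z = x @ p # y" and moves: "p j \<noteq> None"
    and no_later: "own_actions j y = []"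
    using game_form_terminal_own_actions_nonempty[OF G z] by (rule last_own_move)
  have "x @ [p] \<in> tree G"
    using game_form_prefix_closed[OF G, of z "x @ [p]"] z z_eq by (simp add: terminal_def)
  from game_form_dec_if_moves[OF G this moves]
  have "x \<in> dec G j" and act: "the (p j) \<in> acts G j x" .
  then obtain I where I: "I \<in> infos G j" "x \<in> I"
    using game_form_dec_infos[OF G] by blast
  have "the (p j) \<in> actsI G j I"
    using I act unfolding actsI_def by blast
  moreover have "th_at Th j z = the (p j)"
    using z_eq moves no_later by (auto simp: th_at_eq_last_own_action)
  moreover have "strict_prefix x z"
    using z_eq by (simp add: strict_prefixI')
  ultimately show ?thesis
    unfolding has_spl_def using I z card
    by (intro exI[of _ j] exI[of _ I] exI[of _ "the (p j)"]) auto
qed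

definition refines :: "('i \<Rightarrow> 't set) \<Rightarrow> ('i,'t) history \<Rightarrow> ('i,'t) history \<Rightarrow> bool" where
  "refines Th z' z \<longleftrightarrow> (\<forall>j. th_at Th j z' \<subseteq> th_at Th j z)"

lemma no_spl_if_terminals_refined:
  assumes fin: "\<forall>j. finite (Th j)" and gm: "gm Th f G" and no_spl: "\<not> has_spl Th G"
    and refined: "\<forall>z' \<in> terminal G'. \<exists>z \<in> terminal G. refines Th z' z"
  shows "\<not> has_spl Th G'"
proof
  assume "has_spl Th G'"
  then obtain z' j where z': "z' \<in> terminal G'" and card: "2 \<le> card (th_at Th j z')"
    using has_spl_imp_terminal_card by blast
  obtain z where z: "z \<in> terminal G" and sub: "th_at Th j z' \<subseteq> th_at Th j z"
    using refined z' by (auto simp: refines_def)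
  have "finite (th_at Th j z)"
    using gm_th_at_subset[OF gm, of z j] z fin finite_subset by (auto simp: terminal_def)
  then have "2 \<le> card (th_at Th j z)"
    using card card_mono[OF _ sub] by linarith
  then show False
    using gm_terminal_card_imp_has_spl[OF gm z] no_spl by blast
qed

lemma coa_img_through_J:
  assumes "h \<in> I" "g = h @ p # r1 @ q # r2" "p i = Some a" "h @ p # r1 \<in> J" "q i = Some b"
  shows "h @ (p(i := Some b)) # r1 @ drop_mv i q @ r2 \<in> coa_img G i I a J g"
proof -
  have "\<exists>h p r. h \<in> I \<and> g = h @ p # r \<and> p i = Some a" using assms by blast
  then show ?thesis unfolding coa_img_def using assms by simp blast
qed

lemma coa_img_avoiding_J:
  assumes "h \<in> I" "g = h @ p # r" "p i = Some a" "b \<in> actsI G i J"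
    "\<forall>r1 q r2. r = r1 @ q # r2 \<longrightarrow> h @ p # r1 \<notin> J"
  shows "h @ (p(i := Some b)) # r \<in> coa_img G i I a J g"
proof -
  have "\<exists>h p r. h \<in> I \<and> g = h @ p # r \<and> p i = Some a" using assms by blast
  then show ?thesis unfolding coa_img_def using assms by simp blast
qed

lemma coa_img_unaffected:
  "\<not> (\<exists>h p r. h \<in> I \<and> g = h @ p # r \<and> p i = Some a) \<Longrightarrow> coa_img G i I a J g = {g}"
  unfolding coa_img_def by (rule if_not_P)

lemma coa_img_cases:
  assumes "x \<in> coa_img G i I a J g"
  obtains (unaffected) "\<not> (\<exists>h p r. h \<in> I \<and> g = h @ p # r \<and> p i = Some a)" "x = g"
  | (through_J) h p r1 q r2 b where "h \<in> I" "g = h @ p # r1 @ q # r2" "p i = Some a"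
      "h @ p # r1 \<in> J" "q i = Some b" "x = h @ (p(i := Some b)) # r1 @ drop_mv i q @ r2"
  | (avoiding_J) h p r b where "h \<in> I" "g = h @ p # r" "p i = Some a" "b \<in> actsI G i J"
      "\<forall>r1 q r2. r = r1 @ q # r2 \<longrightarrow> h @ p # r1 \<notin> J" "x = h @ (p(i := Some b)) # r"
proof (cases "\<exists>h p r. h \<in> I \<and> g = h @ p # r \<and> p i = Some a")
  case True
  then show ?thesis using assms that(2,3) unfolding coa_img_def by simp blast
next
  case False
  then show ?thesis using assms that(1) by (simp add: coa_img_unaffected)
qed

lemma own_actions_drop_mv [simp]:
  "own_actions j (drop_mv i q) = (if j = i then [] else own_actions j [q])"
  by (auto simp: drop_mv_def)

lemma snoc_eq_append_Cons:
  "r @ [q'] = r1 @ q # r2 \<Longrightarrow> (r1 = r \<and> q = q' \<and> r2 = []) \<or> (\<exists>r2'. r = r1 @ q # r2')"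
  by (cases r2 rule: rev_cases) auto

locale coalescing =
  fixes Th :: "'i \<Rightarrow> 't set" and f :: "('i \<Rightarrow> 't) \<Rightarrow> 'x" and G G' :: "('i,'t,'x) gform"
    and i :: 'i and I J :: "('i,'t) history set" and a :: "'t set"
  assumes gm: "gm Th f G" and I: "I \<in> infos G i" and J: "J \<in> succ_is G i I a"
    and tree_G': "tree G' = (\<Union>g \<in> tree G. coa_img G i I a J g)"
begin

lemma game_form: "game_form G"
  using gm by (simp add: gm_def)

lemma J_witness:
  obtains h0 p0 r0 where "J \<in> infos G i" "h0 \<in> I" "h0 @ p0 # r0 \<in> J" "p0 i = Some a"
    "own_actions i r0 = []"
proof -
  obtain h0 p0 r0 where "J \<in> infos G i" "h0 \<in> I" "h0 @ p0 # r0 \<in> J" "p0 i = Some a"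
    and "\<forall>k < length r0. (r0 ! k) i = None"
    using J unfolding succ_is_def by blast
  moreover from this(5) have "own_actions i r0 = []"
    by (auto simp: own_actions_def filter_empty_conv in_set_conv_nth)
  ultimately show thesis using that by blast
qed

text \<open>Perfect recall fixes the number of moves of i on I and on J, and the witness of
  J \<in> succ_is shows that these numbers differ by one.\<close>
lemma no_own_action_between:
  assumes "h \<in> I" "h @ p # r \<in> J" "p i \<noteq> None"
  shows "own_actions i r = []"
proof -
  obtain h0 p0 r0 where J': "J \<in> infos G i" and w: "h0 \<in> I" "h0 @ p0 # r0 \<in> J" "p0 i = Some a"
    "own_actions i r0 = []"
    by (rule J_witness)
  have "length (own_actions i h) = length (own_actions i h0)"
    using game_form_own_actions_length_eq[OF game_form I assms(1) w(1)] .
  moreover have "length (own_actions i (h @ p # r)) = length (own_actions i (h0 @ p0 # r0))"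
    using game_form_own_actions_length_eq[OF game_form J' assms(2) w(2)] .
  ultimately show ?thesis using assms(3) w(3,4) by simp
qed

lemma acts_J: "b \<in> actsI G i J \<Longrightarrow> x \<in> J \<Longrightarrow> b \<in> acts G i x"
  using game_form_acts_eq[OF game_form] J unfolding actsI_def succ_is_def by blast

lemma actsI_J_subset: "b \<in> actsI G i J \<Longrightarrow> b \<subseteq> a"
proof -
  assume b: "b \<in> actsI G i J"
  obtain h0 p0 r0 where J': "J \<in> infos G i" and w: "h0 @ p0 # r0 \<in> J" "p0 i = Some a"
    "own_actions i r0 = []"
    by (rule J_witness)
  have "h0 @ p0 # r0 \<in> dec G i"
    using game_form_infos_dec[OF game_form J' w(1)] .
  then have "\<Union>(acts G i (h0 @ p0 # r0)) = th_at Th i (h0 @ p0 # r0)"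
    using gm unfolding gm_def by blast
  also have "\<dots> = a"
    using w(2,3) by (simp add: th_at_eq_last_own_action)
  finally show ?thesis using acts_J[OF b w(1)] by blast
qed

lemma actsI_J_nonempty: obtains b where "b \<in> actsI G i J"
proof -
  obtain h0 p0 r0 where J': "J \<in> infos G i" and w: "h0 @ p0 # r0 \<in> J"
    by (rule J_witness)
  have "i \<in> movers G (h0 @ p0 # r0)"
    using game_form_infos_dec[OF game_form J' w] by (simp add: dec_def)
  then obtain p where "p \<in> children G (h0 @ p0 # r0)" "p i \<noteq> None"
    by (auto simp: movers_def)
  then have "the (p i) \<in> actsI G i J"
    using w unfolding actsI_def acts_def by auto
  then show thesis by (rule that)
qed

lemma terminal_G'_not_extended:
  "z' \<in> terminal G' \<Longrightarrow> g \<in> tree G \<Longrightarrow> z' @ [q] \<notin> coa_img G i I a J g"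
  using tree_G' by (auto simp: terminal_def children_def)

lemma terminal_unaffected:
  assumes z': "z' \<in> terminal G'" and g: "z' \<in> tree G"
    and unaffected: "\<not> (\<exists>h p r. h \<in> I \<and> z' = h @ p # r \<and> p i = Some a)"
  shows "z' \<in> terminal G"
proof (rule terminalI[OF g])
  fix q assume gq: "z' @ [q] \<in> tree G"
  show False
  proof (cases "\<exists>h p r. h \<in> I \<and> z' @ [q] = h @ p # r \<and> p i = Some a")
    case True
    then obtain h p r where hpr: "h \<in> I" "z' @ [q] = h @ p # r" "p i = Some a"
      by blast
    obtain b where "b \<in> actsI G i J"
      by (rule actsI_J_nonempty)
    show False
    proof (cases r rule: rev_cases)
      case Nil
      then have "z' = h" and "z' @ [q] = h @ [p]" using hpr(2) by simp_all
      from coa_img_avoiding_J[OF hpr(1) this(2) hpr(3) \<open>b \<in> actsI G i J\<close>]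
      have "z' @ [p(i := Some b)] \<in> coa_img G i I a J (z' @ [q])"
        using \<open>z' = h\<close> by simp
      then show False using terminal_G'_not_extended[OF z' gq] by blast
    next
      case (snoc ys y)
      then have "z' = h @ p # ys" using hpr(2) by simp
      then show False using unaffected hpr by blast
    qed
  next
    case False
    then have "z' @ [q] \<in> coa_img G i I a J (z' @ [q])"
      by (simp add: coa_img_unaffected)
    then show False using terminal_G'_not_extended[OF z' gq] by blast
  qed
qed

lemma terminal_through_J:
  assumes z': "z' \<in> terminal G'" and g: "g \<in> tree G"
    and "h \<in> I" "g = h @ p # r1 @ q # r2" "p i = Some a" "h @ p # r1 \<in> J" "q i = Some b"
    and z'_eq: "z' = h @ (p(i := Some b)) # r1 @ drop_mv i q @ r2"
  shows "g \<in> terminal G" "refines Th z' g"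
proof -
  show "g \<in> terminal G"
  proof (rule terminalI[OF g])
    fix q' assume gq: "g @ [q'] \<in> tree G"
    have "g @ [q'] = h @ p # r1 @ q # (r2 @ [q'])" using assms(4) by simp
    from coa_img_through_J[where G = G, OF assms(3) this assms(5-7)]
    show False using terminal_G'_not_extended[OF z' gq] z'_eq by simp
  qed
  have "own_actions i r1 = []"
    using no_own_action_between assms(3,5,6) by simp
  then show "refines Th z' g"
    using assms(4,5,7) z'_eq by (simp add: refines_def th_at_eq_last_own_action)
qed

lemma terminal_avoiding_J:
  assumes z': "z' \<in> terminal G'" and g: "g \<in> tree G" and "g \<notin> J"
    and "h \<in> I" "g = h @ p # r" "p i = Some a" "b \<in> actsI G i J"
    and avoids: "\<forall>r1 q r2. r = r1 @ q # r2 \<longrightarrow> h @ p # r1 \<notin> J"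
    and z'_eq: "z' = h @ (p(i := Some b)) # r"
  shows "g \<in> terminal G" "refines Th z' g"
proof -
  show "g \<in> terminal G"
  proof (rule terminalI[OF g])
    fix q' assume gq: "g @ [q'] \<in> tree G"
    have "\<forall>r1 q r2. r @ [q'] = r1 @ q # r2 \<longrightarrow> h @ p # r1 \<notin> J"
      using snoc_eq_append_Cons avoids \<open>g \<notin> J\<close> assms(5) by metis
    moreover have "g @ [q'] = h @ p # (r @ [q'])" using assms(5) by simp
    ultimately have "z' @ [q'] \<in> coa_img G i I a J (g @ [q'])"
      using coa_img_avoiding_J[where p = p and i = i, OF assms(4) _ assms(6,7)] z'_eq by simp
    then show False using terminal_G'_not_extended[OF z' gq] by simp
  qed
  have "b \<subseteq> a"
    using actsI_J_subset assms(7) by blast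
  then show "refines Th z' g"
    using assms(5,6) z'_eq by (auto simp: refines_def th_at_eq_last_own_action)
qed

lemma terminal_ending_in_J:
  assumes z': "z' \<in> terminal G'" and g: "g \<in> tree G" and "g \<in> J"
    and "h \<in> I" "g = h @ p # r" "p i = Some a" "b \<in> actsI G i J"
    and z'_eq: "z' = h @ (p(i := Some b)) # r"
  obtains q' where "g @ [q'] \<in> terminal G" "refines Th z' (g @ [q'])"
proof -
  obtain q' where q': "q' \<in> children G g" "q' i = Some b"
    using acts_J[OF assms(7,3)] by (auto simp: acts_def)
  have gq: "g @ [q'] \<in> tree G"
    using q'(1) by (simp add: children_def)
  have "h @ p # r \<in> J" using assms(3,5) by simp
  have through_J:
      "h @ (p(i := Some b)) # r @ drop_mv i q' @ r2 \<in> coa_img G i I a J (g @ q' # r2)" for r2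
    by (rule coa_img_through_J[OF assms(4)]) (use assms(5,6) q'(2) \<open>h @ p # r \<in> J\<close> in simp_all)
  have "z' @ drop_mv i q' \<in> coa_img G i I a J (g @ [q'])"
    using through_J[of "[]"] z'_eq by simp
  then have "drop_mv i q' = []"
    using terminal_G'_not_extended[OF z' gq] by (auto simp: drop_mv_def split: if_splits)
  then have others_idle: "\<forall>j. j \<noteq> i \<longrightarrow> q' j = None"
    by (auto simp: drop_mv_def split: if_splits)
  have "g @ [q'] \<in> terminal G"
  proof (rule terminalI[OF gq])
    fix q'' assume gq2: "(g @ [q']) @ [q''] \<in> tree G"
    have "z' @ [q''] \<in> coa_img G i I a J ((g @ [q']) @ [q''])"
      using through_J[of "[q'']"] z'_eq \<open>drop_mv i q' = []\<close> by simp
    then show False using terminal_G'_not_extended[OF z' gq2] by simp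
  qed
  moreover have "own_actions i r = []"
    using no_own_action_between assms(3-6) by simp
  then have "refines Th z' (g @ [q'])"
    using assms(5,6) z'_eq q'(2) others_idle by (simp add: refines_def th_at_eq_last_own_action)
  ultimately show thesis by (rule that)
qed

lemma terminal_G'_refines: "z' \<in> terminal G' \<Longrightarrow> \<exists>z \<in> terminal G. refines Th z' z"
proof -
  assume z': "z' \<in> terminal G'"
  then obtain g where g: "g \<in> tree G" and z'_img: "z' \<in> coa_img G i I a J g"
    using tree_G' by (auto simp: terminal_def)
  from z'_img show ?thesis
  proof (cases rule: coa_img_cases)
    case unaffected
    then show ?thesis
      using terminal_unaffected[OF z'] g by (auto simp: refines_def)
  next
    case through_J
    then show ?thesis using terminal_through_J[OF z' g] by blast
  next
    case (avoiding_J h p r b)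
    show ?thesis
    proof (cases "g \<in> J")
      case True
      then show ?thesis using terminal_ending_in_J[OF z' g True] avoiding_J by metis
    next
      case False
      then show ?thesis using terminal_avoiding_J[OF z' g False] avoiding_J by blast
    qed
  qed
qed

end

theorem mainTheorem12:
  fixes Th :: "'i::finite \<Rightarrow> 't set" and f :: "('i \<Rightarrow> 't) \<Rightarrow> 'x::finite"
    and G G' :: "('i,'t,'x) gform"
  assumes "\<forall>j. finite (Th j)"
    and "gm Th f G"
    and "\<not> has_spl Th G"
    and "coa Th G G' \<or> ill G' G"
  shows "\<not> has_spl Th G'"
proof (rule no_spl_if_terminals_refined[OF assms(1-3)])
  from assms(4) show "\<forall>z' \<in> terminal G'. \<exists>z \<in> terminal G. refines Th z' z"
  proof
    assume "coa Th G G'"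
    then obtain i I a J where "I \<in> infos G i" "J \<in> succ_is G i I a"
      "tree G' = (\<Union>g \<in> tree G. coa_img G i I a J g)"
      unfolding coa_def by (elim conjE exE) (rule that; assumption)
    then interpret coalescing Th f G G' i I J a
      using assms(2) by unfold_locales
    show ?thesis using terminal_G'_refines by blast
  next
    assume "ill G' G"
    then have "tree G = tree G'"
      unfolding ill_def by (elim conjE exE) assumption
    then have "terminal G' = terminal G"
      by (simp add: terminal_def children_def)
    then show ?thesis by (auto simp: refines_def)
  qed
qed

end
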